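(* Let $\mathbb{F}$ be a field, $n \ge 1$ an integer, and $I$ a non-trivial ideal of $\mathbb{F}[X_1,\ldots,X_n]$ such that the quotient space $\mathbb{F}[X_1,\ldots,X_n]/I$ has finite dimension $K$ over $\mathbb{F}$. Let $G(I)$ be the reduced Gröbner basis of $I$ with respect to the graded lexicographic order. Then $$|G(I)| \le (n-1)K + 1,$$ and equality holds if and only if $K = 1$ or $n = 1$.
   Context: The graded lexicographic order compares monomials first by total degree and then lexicographically (with $X_1 > X_2 > \cdots > X_n$). A Gröbner basis of a non-zero ideal $I$ with respect to a monomial order is a finite generating set $G$ of $I$ such that the leading monomial of every $f \in I$ is divisible by the leading monomial of some element of $G$; it is reduced if each element is monic and no leading monomial of an element divides any non-zero term of another element. Each non-zero ideal has a unique reduced Gröbner basis for a given monomial order. *)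

theory Defs
  imports "HOL-Library.Poly_Mapping"
begin

text \<open>Multivariate polynomials over a field: maps from exponent vectors
(exponent vectors, variable X_(i+1) has index i) to coefficients.\<close>

type_synonym 'a mpoly = "(nat \<Rightarrow>\<^sub>0 nat) \<Rightarrow>\<^sub>0 'a"

definition polys :: "nat \<Rightarrow> 'a::field mpoly set" where
  "polys n = {p::'a mpoly. \<forall>m \<in> Poly_Mapping.keys p. Poly_Mapping.keys m \<subseteq> {..<n}}"

definition is_poly_ideal :: "nat \<Rightarrow> 'a::field mpoly set \<Rightarrow> bool" where
  "is_poly_ideal n I \<longleftrightarrow> I \<subseteq> polys n \<and> 0 \<in> I \<and>
     (\<forall>p\<in>I. \<forall>q\<in>I. p + q \<in> I) \<and>
     (\<forall>p\<in>I. \<forall>r\<in>polys n. r * p \<in> I)"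

definition smult_mp :: "'a::field \<Rightarrow> 'a mpoly \<Rightarrow> 'a mpoly" where
  "smult_mp c p = Poly_Mapping.single 0 c * p"

definition quot_basis :: "nat \<Rightarrow> 'a::field mpoly set \<Rightarrow> 'a mpoly list \<Rightarrow> bool" where
  "quot_basis n I bs \<longleftrightarrow> set bs \<subseteq> polys n \<and>
     (\<forall>p\<in>polys n. \<exists>c. p - (\<Sum>i<length bs. smult_mp (c i) (bs ! i)) \<in> I) \<and>
     (\<forall>c. (\<Sum>i<length bs. smult_mp (c i) (bs ! i)) \<in> I \<longrightarrow> (\<forall>i<length bs. c i = 0))"

definition quot_dim :: "nat \<Rightarrow> 'a::field mpoly set \<Rightarrow> nat \<Rightarrow> bool" where
  "quot_dim n I K \<longleftrightarrow> (\<exists>bs. length bs = K \<and> quot_basis n I bs)"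

definition mdeg :: "(nat \<Rightarrow>\<^sub>0 nat) \<Rightarrow> nat" where
  "mdeg m = (\<Sum>i\<in>Poly_Mapping.keys m. Poly_Mapping.lookup m i)"

text \<open>Strict graded lexicographic order with X_1 > X_2 > ... (index 0 largest).\<close>
definition deglex_less :: "(nat \<Rightarrow>\<^sub>0 nat) \<Rightarrow> (nat \<Rightarrow>\<^sub>0 nat) \<Rightarrow> bool" where
  "deglex_less m1 m2 \<longleftrightarrow> mdeg m1 < mdeg m2 \<or>
     (mdeg m1 = mdeg m2 \<and>
       (\<exists>i. Poly_Mapping.lookup m1 i < Poly_Mapping.lookup m2 i \<and> (\<forall>j<i. Poly_Mapping.lookup m1 j = Poly_Mapping.lookup m2 j)))"

definition lead_mon :: "'a::field mpoly \<Rightarrow> (nat \<Rightarrow>\<^sub>0 nat)" where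
  "lead_mon p = (THE m. m \<in> Poly_Mapping.keys p \<and> (\<forall>m'\<in>Poly_Mapping.keys p. m' \<noteq> m \<longrightarrow> deglex_less m' m))"

definition lead_coef :: "'a::field mpoly \<Rightarrow> 'a" where
  "lead_coef p = Poly_Mapping.lookup p (lead_mon p)"

definition mon_dvd :: "(nat \<Rightarrow>\<^sub>0 nat) \<Rightarrow> (nat \<Rightarrow>\<^sub>0 nat) \<Rightarrow> bool" where
  "mon_dvd m1 m2 \<longleftrightarrow> (\<forall>i. Poly_Mapping.lookup m1 i \<le> Poly_Mapping.lookup m2 i)"

definition groebner_basis :: "nat \<Rightarrow> 'a::field mpoly set \<Rightarrow> 'a mpoly set \<Rightarrow> bool" where
  "groebner_basis n I G \<longleftrightarrow> finite G \<and> G \<subseteq> I \<and>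
     (\<forall>f\<in>I. \<exists>q. (\<forall>g\<in>G. q g \<in> polys n) \<and> f = (\<Sum>g\<in>G. q g * g)) \<and>
     (\<forall>f\<in>I. f \<noteq> 0 \<longrightarrow> (\<exists>g\<in>G. g \<noteq> 0 \<and> mon_dvd (lead_mon g) (lead_mon f)))"

definition reduced_groebner_basis :: "nat \<Rightarrow> 'a::field mpoly set \<Rightarrow> 'a mpoly set \<Rightarrow> bool" where
  "reduced_groebner_basis n I G \<longleftrightarrow> groebner_basis n I G \<and>
     (\<forall>g\<in>G. g \<noteq> 0 \<and> lead_coef g = 1) \<and>
     (\<forall>g\<in>G. \<forall>g'\<in>G. g \<noteq> g' \<longrightarrow> (\<forall>m\<in>Poly_Mapping.keys g'. \<not> mon_dvd (lead_mon g) m))"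

end

theory Submission
  imports Defs
begin

(* Let L be the set of leading monomials of the reduced basis and S the set of standard
   monomials, those divisible by no element of L. Standard monomials are linearly independent
   modulo I, so |S| <= K. Subtracting the smallest variable occurring in a non-zero monomial
   maps L and S - {0} injectively into the pairs S x {1..n}, which gives
   |L| + |S| - 1 <= n |S|, i.e. |G| = |L| <= (n - 1) |S| + 1. For n >= 2 and |S| >= 2 some
   pair is missed, which excludes equality unless K = 1 (then S = {0} and L consists of the
   n variables) or n = 1. *)

lemma mdeg_eq_0_iff: "mdeg m = 0 \<longleftrightarrow> m = 0"
  by (auto simp: mdeg_def in_keys_iff intro: poly_mapping_eqI)

lemma deglex_less_irrefl: "\<not> deglex_less m m"
  by (auto simp: deglex_less_def)

lemma lex_less_trans:
  fixes a b c :: "nat \<Rightarrow>\<^sub>0 nat" and i k :: nat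
  assumes "Poly_Mapping.lookup a i < Poly_Mapping.lookup b i"
    and "\<forall>j<i. Poly_Mapping.lookup a j = Poly_Mapping.lookup b j"
    and "Poly_Mapping.lookup b k < Poly_Mapping.lookup c k"
    and "\<forall>j<k. Poly_Mapping.lookup b j = Poly_Mapping.lookup c j"
  shows "\<exists>i. Poly_Mapping.lookup a i < Poly_Mapping.lookup c i \<and>
    (\<forall>j<i. Poly_Mapping.lookup a j = Poly_Mapping.lookup c j)"
proof (cases "i \<le> k")
  case True
  with assms(3,4) have "Poly_Mapping.lookup b i \<le> Poly_Mapping.lookup c i"
    by (cases "i = k") auto
  with assms(1) have "Poly_Mapping.lookup a i < Poly_Mapping.lookup c i"
    by simp
  with True assms show ?thesis by (intro exI[of _ i]) auto
next
  case False
  with assms show ?thesis by (intro exI[of _ k]) auto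
qed

lemma deglex_less_trans:
  assumes ab: "deglex_less a b" and bc: "deglex_less b c"
  shows "deglex_less a c"
proof (cases "mdeg a < mdeg c")
  case False
  with ab bc have "mdeg a = mdeg b" "mdeg b = mdeg c"
    unfolding deglex_less_def by auto
  with ab bc lex_less_trans[where a = a and b = b and c = c] show ?thesis
    unfolding deglex_less_def by auto
qed (simp add: deglex_less_def)

lemma deglex_less_linear:
  assumes "m1 \<noteq> m2" shows "deglex_less m1 m2 \<or> deglex_less m2 m1"
proof (cases "mdeg m1 = mdeg m2")
  case True
  from assms obtain i where "Poly_Mapping.lookup m1 i \<noteq> Poly_Mapping.lookup m2 i"
    by (metis poly_mapping_eqI)
  define k where "k = (LEAST i. Poly_Mapping.lookup m1 i \<noteq> Poly_Mapping.lookup m2 i)"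
  have "Poly_Mapping.lookup m1 k \<noteq> Poly_Mapping.lookup m2 k"
    unfolding k_def by (rule LeastI) fact
  moreover have "\<forall>j<k. Poly_Mapping.lookup m1 j = Poly_Mapping.lookup m2 j"
    unfolding k_def using not_less_Least by blast
  ultimately show ?thesis
    using True unfolding deglex_less_def by (metis nat_neq_iff)
qed (auto simp: deglex_less_def)

lemma not_deglex_less_0: "\<not> deglex_less m 0"
  by (auto simp: deglex_less_def mdeg_eq_0_iff mdeg_def)

lemma finite_deglex_greatest:
  "finite A \<Longrightarrow> A \<noteq> {} \<Longrightarrow> \<exists>m\<in>A. \<forall>m'\<in>A. m' \<noteq> m \<longrightarrow> deglex_less m' m"
proof (induction A rule: finite_ne_induct)
  case (insert x F)
  then obtain m where m: "m \<in> F" "\<forall>m'\<in>F. m' \<noteq> m \<longrightarrow> deglex_less m' m" by blast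
  show ?case
  proof (cases "deglex_less x m")
    case False
    then have "deglex_less m x" using deglex_less_linear[of x m] insert.hyps m(1) by auto
    then show ?thesis using m deglex_less_trans by (intro bexI[of _ x]) auto
  qed (use m in auto)
qed simp

lemma lead_mon_greatest:
  assumes "p \<noteq> 0"
  shows "lead_mon p \<in> Poly_Mapping.keys p"
    and "\<And>m. m \<in> Poly_Mapping.keys p \<Longrightarrow> m \<noteq> lead_mon p \<Longrightarrow> deglex_less m (lead_mon p)"
proof -
  have "\<exists>!m. m \<in> Poly_Mapping.keys p \<and> (\<forall>m'\<in>Poly_Mapping.keys p. m' \<noteq> m \<longrightarrow> deglex_less m' m)"
  proof (rule ex_ex1I)
    show "\<exists>m. m \<in> Poly_Mapping.keys p \<and> (\<forall>m'\<in>Poly_Mapping.keys p. m' \<noteq> m \<longrightarrow> deglex_less m' m)"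
      using finite_deglex_greatest[of "Poly_Mapping.keys p"] assms by auto
  qed (metis deglex_less_trans deglex_less_irrefl)
  from theI'[OF this] show "lead_mon p \<in> Poly_Mapping.keys p"
    and "\<And>m. m \<in> Poly_Mapping.keys p \<Longrightarrow> m \<noteq> lead_mon p \<Longrightarrow> deglex_less m (lead_mon p)"
    unfolding lead_mon_def by blast+
qed

lemma lead_mon_eq_0_imp_const:
  assumes "p \<noteq> 0" "lead_mon p = 0"
  shows "p = Poly_Mapping.single 0 (lead_coef p)"
proof (rule poly_mapping_eqI)
  fix m
  have "m \<notin> Poly_Mapping.keys p" if "m \<noteq> 0"
    using lead_mon_greatest[OF assms(1)] assms(2) not_deglex_less_0 that by metis
  then show "Poly_Mapping.lookup p m = Poly_Mapping.lookup (Poly_Mapping.single 0 (lead_coef p)) m"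
    using assms(2) by (cases "m = 0") (auto simp: lead_coef_def lookup_single in_keys_iff)
qed

definition var_mon :: "nat \<Rightarrow> (nat \<Rightarrow>\<^sub>0 nat)" where
  "var_mon i = Poly_Mapping.single i 1"

lemma lookup_var_mon: "Poly_Mapping.lookup (var_mon i) j = (if i = j then 1 else 0)"
  by (simp add: var_mon_def lookup_single when_def)

lemma keys_var_mon [simp]: "Poly_Mapping.keys (var_mon i) = {i}"
  by (simp add: var_mon_def)

lemma var_mon_nonzero [simp]: "var_mon i \<noteq> 0"
  by (metis keys_var_mon keys_zero insert_not_empty)

lemma var_mon_eq_iff [simp]: "var_mon i = var_mon j \<longleftrightarrow> i = j"
  by (metis keys_var_mon singleton_inject)

lemma keys_var_mon_add: "i \<noteq> j \<Longrightarrow> Poly_Mapping.keys (var_mon i + var_mon j) = {i, j}"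
  by (auto simp: in_keys_iff lookup_add lookup_var_mon split: if_splits)

lemma diff_var_mon_add_var_mon:
  "i \<in> Poly_Mapping.keys m \<Longrightarrow> m - var_mon i + var_mon i = m"
  by (rule poly_mapping_eqI) (auto simp: lookup_add lookup_minus lookup_var_mon in_keys_iff)

lemma mon_dvd_refl: "mon_dvd m m"
  by (simp add: mon_dvd_def)

lemma mon_dvd_trans: "mon_dvd a b \<Longrightarrow> mon_dvd b c \<Longrightarrow> mon_dvd a c"
  unfolding mon_dvd_def using order_trans by blast

lemma mon_dvd_keys: "mon_dvd a b \<Longrightarrow> Poly_Mapping.keys a \<subseteq> Poly_Mapping.keys b"
  unfolding mon_dvd_def by (auto simp: in_keys_iff) (metis less_le_trans)

lemma mon_dvd_0: "mon_dvd l 0 \<Longrightarrow> l = 0"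
  unfolding mon_dvd_def by (intro poly_mapping_eqI) simp

lemma mon_dvd_diff_var_mon: "mon_dvd (m - var_mon i) m"
  by (simp add: mon_dvd_def lookup_minus)

lemma mon_dvd_var_monI: "i \<in> Poly_Mapping.keys m \<Longrightarrow> mon_dvd (var_mon i) m"
  by (auto simp: mon_dvd_def lookup_var_mon in_keys_iff)

lemma mon_dvd_var_monD:
  assumes "mon_dvd l (var_mon i)"
  shows "l = 0 \<or> l = var_mon i"
proof -
  have le: "Poly_Mapping.lookup l j \<le> (if i = j then 1 else 0)" for j
    using assms lookup_var_mon unfolding mon_dvd_def by metis
  show ?thesis
  proof (cases "Poly_Mapping.lookup l i = 0")
    case True
    then have "l = 0"
      by (intro poly_mapping_eqI) (metis le le_zero_eq lookup_zero)
    then show ?thesis ..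
  next
    case False
    then have "l = var_mon i"
      by (intro poly_mapping_eqI) (metis le le_zero_eq lookup_var_mon One_nat_def le_SucE)
    then show ?thesis ..
  qed
qed

definition least_var :: "(nat \<Rightarrow>\<^sub>0 nat) \<Rightarrow> nat" where
  "least_var m = Min (Poly_Mapping.keys m)"

definition split_least_var :: "(nat \<Rightarrow>\<^sub>0 nat) \<Rightarrow> (nat \<Rightarrow>\<^sub>0 nat) \<times> nat" where
  "split_least_var m = (m - var_mon (least_var m), least_var m)"

lemma least_var_in_keys: "m \<noteq> 0 \<Longrightarrow> least_var m \<in> Poly_Mapping.keys m"
  unfolding least_var_def by (rule Min_in) auto

lemma least_var_var_mon_add: "i \<noteq> j \<Longrightarrow> least_var (var_mon i + var_mon j) = min i j"
  by (simp add: least_var_def keys_var_mon_add)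

lemma split_least_var_eqD:
  assumes "m \<noteq> 0" "split_least_var m = (s, i)"
  shows "m = s + var_mon i" "least_var m = i"
  using assms diff_var_mon_add_var_mon[OF least_var_in_keys[OF assms(1)]]
  by (auto simp: split_least_var_def)

lemma inj_on_split_least_var: "inj_on split_least_var (- {0})"
  by (rule inj_onI) (metis Compl_iff insertI1 prod.exhaust split_least_var_eqD)

locale minimal_monomial_generators =
  fixes n :: nat and L :: "(nat \<Rightarrow>\<^sub>0 nat) set"
  assumes keys_generator: "l \<in> L \<Longrightarrow> Poly_Mapping.keys l \<subseteq> {..<n}"
    and zero_notin_generators: "0 \<notin> L"
    and generators_antichain: "l \<in> L \<Longrightarrow> l' \<in> L \<Longrightarrow> mon_dvd l l' \<Longrightarrow> l = l'"
begin

definition std_mons :: "(nat \<Rightarrow>\<^sub>0 nat) set" where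
  "std_mons = {s. Poly_Mapping.keys s \<subseteq> {..<n} \<and> (\<forall>l\<in>L. \<not> mon_dvd l s)}"

lemma zero_in_std_mons: "0 \<in> std_mons"
  using zero_notin_generators mon_dvd_0 by (fastforce simp: std_mons_def)

lemma std_mons_mon_dvd: "s \<in> std_mons \<Longrightarrow> mon_dvd t s \<Longrightarrow> t \<in> std_mons"
  unfolding std_mons_def using mon_dvd_keys mon_dvd_trans by blast

lemma generator_notin_std_mons: "l \<in> L \<Longrightarrow> l \<notin> std_mons"
  unfolding std_mons_def using mon_dvd_refl by blast

lemma generator_diff_var_mon_in_std_mons:
  assumes l: "l \<in> L" and i: "i \<in> Poly_Mapping.keys l"
  shows "l - var_mon i \<in> std_mons"
proof -
  have "\<not> mon_dvd l' (l - var_mon i)" if "l' \<in> L" for l'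
  proof
    assume dvd: "mon_dvd l' (l - var_mon i)"
    then have "l' = l"
      using generators_antichain[OF that l] mon_dvd_diff_var_mon mon_dvd_trans by blast
    with dvd have "Poly_Mapping.lookup l i \<le> Poly_Mapping.lookup l i - 1"
      unfolding mon_dvd_def by (metis lookup_minus lookup_var_mon)
    with i show False by (simp add: in_keys_iff)
  qed
  moreover have "Poly_Mapping.keys (l - var_mon i) \<subseteq> {..<n}"
    using keys_generator[OF l] mon_dvd_keys[OF mon_dvd_diff_var_mon, of l i] by blast
  ultimately show ?thesis by (simp add: std_mons_def)
qed

abbreviation split_domain :: "(nat \<Rightarrow>\<^sub>0 nat) set" where
  "split_domain \<equiv> L \<union> (std_mons - {0})"

lemma split_least_var_image:
  "split_least_var ` split_domain \<subseteq> std_mons \<times> {..<n}"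
proof
  fix x assume "x \<in> split_least_var ` split_domain"
  then obtain m where m: "m \<in> split_domain" and x: "x = split_least_var m" by blast
  have "m \<noteq> 0" using m zero_notin_generators by auto
  then have i: "least_var m \<in> Poly_Mapping.keys m" by (rule least_var_in_keys)
  moreover have "Poly_Mapping.keys m \<subseteq> {..<n}"
    using m keys_generator by (auto simp: std_mons_def)
  ultimately show "x \<in> std_mons \<times> {..<n}"
    using m generator_diff_var_mon_in_std_mons[OF _ i] std_mons_mon_dvd[OF _ mon_dvd_diff_var_mon]
    by (auto simp: x split_least_var_def)
qed

lemma split_least_var_preimage:
  assumes "(s, i) \<in> split_least_var ` split_domain"
  shows "least_var (s + var_mon i) = i"
    and "\<And>j. j \<in> Poly_Mapping.keys (s + var_mon i) \<Longrightarrow> s + var_mon i - var_mon j \<in> std_mons"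
proof -
  from assms obtain m where m: "m \<in> split_domain" "split_least_var m = (s, i)" by force
  have "m \<noteq> 0" using m zero_notin_generators by auto
  with m have "m = s + var_mon i" "least_var m = i" using split_least_var_eqD by blast+
  with m show "least_var (s + var_mon i) = i"
    and "\<And>j. j \<in> Poly_Mapping.keys (s + var_mon i) \<Longrightarrow> s + var_mon i - var_mon j \<in> std_mons"
    using generator_diff_var_mon_in_std_mons std_mons_mon_dvd mon_dvd_diff_var_mon by auto
qed

lemma finite_split_domain: "finite std_mons \<Longrightarrow> finite split_domain"
  using zero_notin_generators
  by (intro finite_imageD[OF finite_subset[OF split_least_var_image]]
        inj_on_subset[OF inj_on_split_least_var]) auto

lemma card_std_mons_pos: "finite std_mons \<Longrightarrow> 0 < card std_mons"
  using zero_in_std_mons card_gt_0_iff by blast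

lemma card_split_domain:
  assumes "finite std_mons"
  shows "card split_domain = card L + card std_mons - 1"
proof -
  have "finite L" using finite_split_domain[OF assms] by blast
  moreover have "L \<inter> (std_mons - {0}) = {}" using generator_notin_std_mons by blast
  ultimately have "card split_domain = card L + card (std_mons - {0})"
    using assms by (simp add: card_Un_disjoint)
  then show ?thesis using assms card_std_mons_pos zero_in_std_mons by simp
qed

lemma card_split_domain_le:
  assumes "finite std_mons"
  shows "card split_domain \<le> n * card std_mons"
proof -
  have "card split_domain \<le> card (std_mons \<times> {..<n})"
    using assms zero_notin_generators split_least_var_image
    by (intro card_inj_on_le[OF inj_on_subset[OF inj_on_split_least_var]]) auto
  then show ?thesis by (simp add: card_cartesian_product mult.commute)
qed

lemma card_generators_le:
  assumes "finite std_mons"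
  shows "card L + card std_mons \<le> n * card std_mons + 1"
  using card_split_domain[OF assms] card_split_domain_le[OF assms] by linarith

lemma split_least_var_not_onto:
  assumes "2 \<le> n" and "std_mons \<noteq> {0}"
  shows "\<not> std_mons \<times> {..<n} \<subseteq> split_least_var ` split_domain"
proof
  assume onto: "std_mons \<times> {..<n} \<subseteq> split_least_var ` split_domain"
  from assms(2) zero_in_std_mons obtain t where t: "t \<in> std_mons" "t \<noteq> 0" by blast
  define j where "j = least_var t"
  have "j \<in> Poly_Mapping.keys t" unfolding j_def using t(2) by (rule least_var_in_keys)
  then have j: "var_mon j \<in> std_mons" "j < n"
    using t(1) std_mons_mon_dvd[OF t(1) mon_dvd_var_monI] unfolding std_mons_def by blast+
  obtain k where k: "k < n" "k \<noteq> j"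
    using assms(1) by (intro that[of "if j = 0 then 1 else 0"]) auto
  show False
  proof (cases "var_mon k \<in> std_mons")
    case True
    define a b where "a = min j k" and "b = max j k"
    have "var_mon a \<in> std_mons" "b < n" "a \<noteq> b"
      using j k True by (auto simp: a_def b_def min_def max_def)
    then have "least_var (var_mon a + var_mon b) = b"
      using onto split_least_var_preimage(1) by blast
    moreover have "min a b = a" by (simp add: a_def b_def)
    ultimately show False using least_var_var_mon_add[OF \<open>a \<noteq> b\<close>] \<open>a \<noteq> b\<close> by simp
  next
    case False
    have "(var_mon j, k) \<in> split_least_var ` split_domain" using onto j k by blast
    moreover have "j \<in> Poly_Mapping.keys (var_mon j + var_mon k)"
      using keys_var_mon_add[OF k(2)[symmetric]] by simp
    ultimately have "var_mon j + var_mon k - var_mon j \<in> std_mons"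
      by (rule split_least_var_preimage(2))
    with False show False by (simp add: add.commute)
  qed
qed

lemma card_generators_less:
  assumes "finite std_mons" "2 \<le> n" "2 \<le> card std_mons"
  shows "card L + card std_mons \<le> n * card std_mons"
proof -
  have "std_mons \<noteq> {0}" using assms(3) by auto
  then have "split_least_var ` split_domain \<subset> std_mons \<times> {..<n}"
    using split_least_var_image split_least_var_not_onto[OF assms(2)] by blast
  then have "card (split_least_var ` split_domain) < card (std_mons \<times> {..<n})"
    using assms(1) by (intro psubset_card_mono) auto
  moreover have "card (split_least_var ` split_domain) = card split_domain"
    using zero_notin_generators
    by (intro card_image inj_on_subset[OF inj_on_split_least_var]) auto
  ultimately show ?thesis
    using card_split_domain[OF assms(1)] card_std_mons_pos[OF assms(1)]
    by (simp add: card_cartesian_product mult.commute)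
qed

lemma var_mon_in_generators:
  assumes "std_mons \<subseteq> {0}" "i < n"
  shows "var_mon i \<in> L"
proof -
  have "var_mon i \<notin> std_mons" using assms(1) by auto
  with assms(2) obtain l where "l \<in> L" "mon_dvd l (var_mon i)"
    by (auto simp: std_mons_def)
  then show ?thesis using mon_dvd_var_monD zero_notin_generators by blast
qed

lemma card_generators_bound:
  assumes n: "1 \<le> n" and fin: "finite std_mons" and K: "card std_mons \<le> K" and "L \<noteq> {}"
  shows "card L \<le> (n - 1) * K + 1 \<and> (card L = (n - 1) * K + 1 \<longleftrightarrow> K = 1 \<or> n = 1)"
proof -
  have S: "1 \<le> card std_mons" using card_std_mons_pos[OF fin] by simp
  have "card L \<le> (n - 1) * card std_mons + 1"
    using card_generators_le[OF fin] n by (simp add: diff_mult_distrib)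
  also have "\<dots> \<le> (n - 1) * K + 1" using K by simp
  finally have bound: "card L \<le> (n - 1) * K + 1" .
  have "0 < card L"
    using \<open>L \<noteq> {}\<close> finite_split_domain[OF fin] by (simp add: card_gt_0_iff)
  then have "card L = (n - 1) * K + 1" if "n = 1"
    using bound that by simp
  moreover have "card L = (n - 1) * K + 1" if "K = 1"
  proof -
    have "std_mons \<subseteq> {0}"
      using that K fin zero_in_std_mons card_le_Suc0_iff_eq[OF fin] by auto
    then have "var_mon ` {..<n} \<subseteq> L" using var_mon_in_generators by blast
    then have "n \<le> card L"
      using finite_split_domain[OF fin] card_mono[of L "var_mon ` {..<n}"]
      by (simp add: card_image inj_on_def)
    with bound that n show ?thesis by simp
  qed
  moreover have strict: "card L < (n - 1) * K + 1" if "2 \<le> n" "2 \<le> K"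
  proof (cases "2 \<le> card std_mons")
    case True
    have "card L \<le> (n - 1) * card std_mons"
      using card_generators_less[OF fin that(1) True] n by (simp add: diff_mult_distrib)
    also have "\<dots> \<le> (n - 1) * K" using K by simp
    finally show ?thesis by simp
  next
    case False
    with S have "card std_mons = 1" by simp
    then have "card L \<le> n" using card_generators_le[OF fin] by simp
    also have "n < (n - 1) * 2 + 1" using that by simp
    also have "\<dots> \<le> (n - 1) * K + 1" using that by simp
    finally show ?thesis .
  qed
  moreover have "K = 1 \<or> n = 1" if "card L = (n - 1) * K + 1"
  proof (rule ccontr)
    assume "\<not> (K = 1 \<or> n = 1)"
    then have "2 \<le> n" "2 \<le> K" using n S K by auto
    with strict that show False by simp
  qed
  ultimately show ?thesis using bound by blast
qed

end

(* One step of Gaussian elimination: b solves the first K equations after equation K has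
   been used to eliminate the unknown with index p. *)
lemma pivot_extend_solution:
  fixes v :: "'j \<Rightarrow> nat \<Rightarrow> 'a::field"
  assumes J: "finite J" "p \<in> J" and pivot: "v p K \<noteq> 0"
    and b: "\<forall>i<K. (\<Sum>j\<in>J - {p}. b j * (v j i - v j K / v p K * v p i)) = 0"
  defines "a \<equiv> \<lambda>j. if j = p then - (\<Sum>j\<in>J - {p}. b j * v j K) / v p K else b j"
  shows "\<forall>i<Suc K. (\<Sum>j\<in>J. a j * v j i) = 0"
proof (intro allI impI)
  fix i assume "i < Suc K"
  have split: "(\<Sum>j\<in>J. a j * v j i) = a p * v p i + (\<Sum>j\<in>J - {p}. b j * v j i)"
    using J by (simp add: sum.remove a_def)
  show "(\<Sum>j\<in>J. a j * v j i) = 0"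
  proof (cases "i = K")
    case False
    with \<open>i < Suc K\<close> b have "(\<Sum>j\<in>J - {p}. b j * (v j i - v j K / v p K * v p i)) = 0" by simp
    then have "(\<Sum>j\<in>J - {p}. b j * v j i) = (\<Sum>j\<in>J - {p}. b j * v j K) / v p K * v p i"
      by (simp add: algebra_simps sum_subtractf sum_distrib_left sum_distrib_right
          sum_divide_distrib)
    with split show ?thesis by (simp add: a_def)
  qed (use split pivot in \<open>simp add: a_def\<close>)
qed

lemma homogeneous_system_nontrivial_solution:
  fixes v :: "'j \<Rightarrow> nat \<Rightarrow> 'a::field"
  assumes "finite J" "K < card J"
  shows "\<exists>a. (\<exists>j\<in>J. a j \<noteq> 0) \<and> (\<forall>i<K. (\<Sum>j\<in>J. a j * v j i) = 0)"
  using assms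
proof (induction K arbitrary: J v)
  case 0
  then show ?case by (intro exI[of _ "\<lambda>_. 1"]) (auto simp: card_gt_0_iff)
next
  case (Suc K)
  show ?case
  proof (cases "\<forall>j\<in>J. v j K = 0")
    case True
    obtain a where a: "\<exists>j\<in>J. a j \<noteq> 0" "\<forall>i<K. (\<Sum>j\<in>J. a j * v j i) = 0"
      using Suc.IH[of J v, OF Suc.prems(1) Suc_lessD[OF Suc.prems(2)]] by blast
    have "\<forall>i<Suc K. (\<Sum>j\<in>J. a j * v j i) = 0"
      using a(2) True by (auto simp: less_Suc_eq)
    with a(1) show ?thesis by blast
  next
    case False
    then obtain p where p: "p \<in> J" "v p K \<noteq> 0" by blast
    have "finite (J - {p})" "K < card (J - {p})" using Suc.prems p by simp_all
    then obtain b
      where b: "\<exists>j\<in>J - {p}. b j \<noteq> 0"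
        and sol: "\<forall>i<K. (\<Sum>j\<in>J - {p}. b j * (v j i - v j K / v p K * v p i)) = 0"
      using Suc.IH[of "J - {p}" "\<lambda>j i. v j i - v j K / v p K * v p i"] by blast
    show ?thesis
      using pivot_extend_solution[OF Suc.prems(1) p sol] b
      by (intro exI[of _ "\<lambda>j. if j = p then - (\<Sum>j\<in>J - {p}. b j * v j K) / v p K else b j"]) auto
  qed
qed

lemma ideal_sum_mem:
  assumes "is_poly_ideal n I" "finite A" "\<And>x. x \<in> A \<Longrightarrow> f x \<in> I"
  shows "sum f A \<in> I"
  using assms(2,3)
  by (induction A rule: finite_induct) (use assms(1) in \<open>auto simp: is_poly_ideal_def\<close>)

lemma smult_mp_mem_ideal:
  assumes "is_poly_ideal n I" "p \<in> I"
  shows "smult_mp c p \<in> I"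
proof -
  have "Poly_Mapping.single 0 c \<in> polys n" by (simp add: polys_def)
  with assms show ?thesis by (simp add: is_poly_ideal_def smult_mp_def)
qed

lemma single_sum: "Poly_Mapping.single k (sum f A) = (\<Sum>x\<in>A. Poly_Mapping.single k (f x))"
  by (induction A rule: infinite_finite_induct) (simp_all add: single_add)

lemma card_le_quot_dim:
  fixes I :: "'a::field mpoly set"
  assumes I: "is_poly_ideal n I" and dim: "quot_dim n I K"
    and T: "finite T" "\<And>t. t \<in> T \<Longrightarrow> Poly_Mapping.keys t \<subseteq> {..<n}"
    and indep: "\<And>F. Poly_Mapping.keys F \<subseteq> T \<Longrightarrow> F \<in> I \<Longrightarrow> F = 0"
  shows "card T \<le> K"
proof (rule ccontr)
  assume "\<not> card T \<le> K"
  obtain bs where bs: "length bs = K" "quot_basis n I bs"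
    using dim unfolding quot_dim_def by blast
  define X where "X t = (Poly_Mapping.single t 1 :: 'a mpoly)" for t
  define r where "r c = (\<Sum>i<K. smult_mp (c i) (bs ! i))" for c
  have "\<forall>t\<in>T. \<exists>c. X t - r c \<in> I"
    using bs T(2) unfolding quot_basis_def polys_def X_def r_def by auto
  then obtain cf where cf: "\<And>t. t \<in> T \<Longrightarrow> X t - r (cf t) \<in> I"
    by metis
  obtain a where a: "\<exists>t\<in>T. a t \<noteq> 0" "\<forall>i<K. (\<Sum>t\<in>T. a t * cf t i) = 0"
    using homogeneous_system_nontrivial_solution[OF T(1), of K cf] \<open>\<not> card T \<le> K\<close> not_le by blast
  define F :: "'a mpoly" where "F = (\<Sum>t\<in>T. Poly_Mapping.single t (a t))"
  have "(\<Sum>t\<in>T. smult_mp (a t) (X t - r (cf t)))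
      = F - (\<Sum>t\<in>T. \<Sum>i<K. Poly_Mapping.single 0 (a t * cf t i) * bs ! i)"
    by (simp add: F_def X_def r_def smult_mp_def right_diff_distrib sum_distrib_left
        mult.assoc[symmetric] mult_single sum_subtractf)
  also have "(\<Sum>t\<in>T. \<Sum>i<K. Poly_Mapping.single 0 (a t * cf t i) * bs ! i)
      = (\<Sum>i<K. Poly_Mapping.single 0 (\<Sum>t\<in>T. a t * cf t i) * bs ! i)"
    by (subst sum.swap) (simp add: single_sum sum_distrib_right)
  also have "\<dots> = 0" using a(2) by simp
  finally have "(\<Sum>t\<in>T. smult_mp (a t) (X t - r (cf t))) = F" by simp
  moreover have "(\<Sum>t\<in>T. smult_mp (a t) (X t - r (cf t))) \<in> I"
    using I T(1) cf by (intro ideal_sum_mem smult_mp_mem_ideal)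
  ultimately have "F \<in> I" by simp
  have lookup_F: "Poly_Mapping.lookup F m = (if m \<in> T then a m else 0)" for m
    unfolding F_def using T(1) by (simp add: lookup_sum lookup_single when_def)
  then have "Poly_Mapping.keys F \<subseteq> T" by (auto simp: in_keys_iff split: if_splits)
  then have "F = 0" using \<open>F \<in> I\<close> by (rule indep)
  with a(1) lookup_F show False by (metis lookup_zero)
qed

lemma reduced_groebner_basis_lead_mon_dvd:
  assumes G: "reduced_groebner_basis n I G" and "g \<in> G" "g' \<in> G"
    and dvd: "mon_dvd (lead_mon g) (lead_mon g')"
  shows "g = g'"
proof (rule ccontr)
  assume "g \<noteq> g'"
  moreover have "lead_mon g' \<in> Poly_Mapping.keys g'"
    using G \<open>g' \<in> G\<close> lead_mon_greatest(1) by (auto simp: reduced_groebner_basis_def)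
  ultimately show False
    using G \<open>g \<in> G\<close> \<open>g' \<in> G\<close> dvd unfolding reduced_groebner_basis_def by blast
qed

lemma reduced_groebner_basis_lead_mons:
  assumes I: "is_poly_ideal n I" "I \<noteq> polys n" and G: "reduced_groebner_basis n I G"
  shows "minimal_monomial_generators n (lead_mon ` G)"
proof -
  have GI: "G \<subseteq> I" and monic: "\<And>g. g \<in> G \<Longrightarrow> g \<noteq> 0 \<and> lead_coef g = 1"
    using G by (auto simp: reduced_groebner_basis_def groebner_basis_def)
  have lead_mon_keys: "lead_mon g \<in> Poly_Mapping.keys g" if "g \<in> G" for g
    using monic[OF that] lead_mon_greatest(1) by blast
  show ?thesis
  proof
    fix l assume "l \<in> lead_mon ` G"
    then obtain g where g: "g \<in> G" "l = lead_mon g" by blast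
    then show "Poly_Mapping.keys l \<subseteq> {..<n}"
      using lead_mon_keys GI I(1) by (fastforce simp: is_poly_ideal_def polys_def)
  next
    show "0 \<notin> lead_mon ` G"
    proof
      assume "0 \<in> lead_mon ` G"
      then obtain g where g: "g \<in> G" "lead_mon g = 0" by force
      then have "g = 1"
        using lead_mon_eq_0_imp_const monic by fastforce
      then have "polys n \<subseteq> I"
        using g(1) GI I(1) by (force simp: is_poly_ideal_def)
      with I show False by (auto simp: is_poly_ideal_def)
    qed
  next
    fix l l' assume "l \<in> lead_mon ` G" "l' \<in> lead_mon ` G" "mon_dvd l l'"
    then show "l = l'"
      using reduced_groebner_basis_lead_mon_dvd[OF G] by blast
  qed
qed

lemma inj_on_lead_mon_reduced_groebner_basis:
  assumes "reduced_groebner_basis n I G"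
  shows "inj_on lead_mon G"
  using reduced_groebner_basis_lead_mon_dvd[OF assms] mon_dvd_refl by (metis inj_onI)

lemma groebner_basis_std_mons_indep:
  assumes "minimal_monomial_generators n (lead_mon ` G)" "groebner_basis n I G" "F \<in> I"
    and "Poly_Mapping.keys F \<subseteq> minimal_monomial_generators.std_mons n (lead_mon ` G)"
  shows "F = 0"
proof (rule ccontr)
  assume "F \<noteq> 0"
  with assms(2,3) obtain g where "g \<in> G" "mon_dvd (lead_mon g) (lead_mon F)"
    by (auto simp: groebner_basis_def)
  moreover have "lead_mon F \<in> minimal_monomial_generators.std_mons n (lead_mon ` G)"
    using assms(4) lead_mon_greatest(1)[OF \<open>F \<noteq> 0\<close>] by blast
  ultimately show False
    using minimal_monomial_generators.std_mons_def[OF assms(1)] by blast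
qed

theorem mainTheorem2:
  fixes I G :: "'a::field mpoly set" and n K :: nat
  assumes "n \<ge> 1"
    and "is_poly_ideal n I" and "I \<noteq> {0}" and "I \<noteq> polys n"
    and "quot_dim n I K"
    and "reduced_groebner_basis n I G"
  shows "card G \<le> (n - 1) * K + 1 \<and> (card G = (n - 1) * K + 1 \<longleftrightarrow> K = 1 \<or> n = 1)"
proof -
  have gens: "minimal_monomial_generators n (lead_mon ` G)"
    using assms(2,4,6) by (rule reduced_groebner_basis_lead_mons)
  interpret minimal_monomial_generators n "lead_mon ` G" by (fact gens)
  have gb: "groebner_basis n I G"
    using assms(6) by (simp add: reduced_groebner_basis_def)
  have "finite std_mons \<and> card std_mons \<le> K"
  proof (rule finite_if_finite_subsets_card_bdd)
    fix T assume "T \<subseteq> std_mons" "finite T"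
    then show "card T \<le> K"
      using assms(2,5) groebner_basis_std_mons_indep[OF gens gb]
      by (intro card_le_quot_dim) (auto simp: std_mons_def)
  qed
  moreover have "lead_mon ` G \<noteq> {}"
    using assms(2,3) gb by (auto simp: is_poly_ideal_def groebner_basis_def)
  moreover have "card G = card (lead_mon ` G)"
    using inj_on_lead_mon_reduced_groebner_basis[OF assms(6)] by (simp add: card_image)
  ultimately show ?thesis
    using card_generators_bound[OF assms(1)] by simp
qed

end
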